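(* Let $A=[a_1\ \cdots\ a_m]^T\in\mathbb{R}^{m\times n}$ and $b=(b_1,\dots,b_m)^T\in\mathbb{R}^m$, let $c_i(x)=a_i^Tx-b_i$, $D(x)=\mathrm{diag}(c_1(x),\dots,c_m(x))$, and let $C(x)=\begin{bmatrix}A^T\\ D(x)\end{bmatrix}\in\mathbb{R}[x]^{(n+m)\times m}$. Then the linear function $Ax-b$ is nonsingular if and only if there exists a matrix polynomial $L(x)\in\mathbb{R}[x]^{m\times(n+m)}$ with $L(x)C(x)=I_m$. Moreover, when $Ax-b$ is nonsingular, $L(x)$ can be chosen with $\deg(L)\le m-\mathrm{rank}\,A$.
   Context: The linear function $Ax-b$ is called nonsingular if $\mathrm{rank}\,C(u)=m$ for all $u\in\mathbb{C}^n$ (equivalently, for every $u\in\mathbb{C}^n$, the vectors $a_i$ with $c_i(u)=0$ are linearly independent). $\deg(L)$ is the maximum degree of the entries of $L$; $I_m$ is the $m\times m$ identity matrix. *)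

theory Defs
  imports "Jordan_Normal_Form.DL_Rank" "HOL-Library.Poly_Mapping"
begin

text \<open>Multivariate real polynomials, represented as finitely supported maps
from monomials (exponent vectors, finitely supported maps nat to nat)
to real coefficients. Variable i corresponds to the coordinate x_i.\<close>

type_synonym rmpoly = "(nat \<Rightarrow>\<^sub>0 nat) \<Rightarrow>\<^sub>0 real"

definition mpoly_vars_below :: "nat \<Rightarrow> rmpoly \<Rightarrow> bool" where
  "mpoly_vars_below n p \<longleftrightarrow> (\<forall>\<alpha>\<in>Poly_Mapping.keys p. Poly_Mapping.keys \<alpha> \<subseteq> {..<n})"

definition mpoly_eval :: "rmpoly \<Rightarrow> real vec \<Rightarrow> real" where
  "mpoly_eval p x = (\<Sum>\<alpha>\<in>Poly_Mapping.keys p. Poly_Mapping.lookup p \<alpha> * (\<Prod>i\<in>Poly_Mapping.keys \<alpha>. (x $ i) ^ Poly_Mapping.lookup \<alpha> i))"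

text \<open>Total degree (the zero polynomial gets degree 0).\<close>
definition mpoly_degree :: "rmpoly \<Rightarrow> nat" where
  "mpoly_degree p = Max (insert 0 ((\<lambda>\<alpha>. \<Sum>i\<in>Poly_Mapping.keys \<alpha>. Poly_Mapping.lookup \<alpha> i) ` Poly_Mapping.keys p))"

text \<open>The matrix C(x) = [A^T; D(x)] of size (n+m) x m, with D(x) = diag(c_1(x),...,c_m(x)),
  c_i(x) = a_i^T x - b_i, where a_i is the i-th row of A (m x n).\<close>
definition Cmat :: "'a::comm_ring_1 mat \<Rightarrow> 'a vec \<Rightarrow> 'a vec \<Rightarrow> 'a mat" where
  "Cmat A b x = mat (dim_col A + dim_row A) (dim_row A)
     (\<lambda>(k, j). if k < dim_col A then A $$ (j, k)
               else if k - dim_col A = j then row A j \<bullet> x - b $ j else 0)"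

definition nonsingular_lin :: "real mat \<Rightarrow> real vec \<Rightarrow> bool" where
  "nonsingular_lin A b \<longleftrightarrow>
     (\<forall>u \<in> carrier_vec (dim_col A) :: complex vec set.
        vec_space.rank (dim_col A + dim_row A)
          (Cmat (map_mat complex_of_real A) (map_vec complex_of_real b) u) = dim_row A)"

definition polymat_eval :: "nat \<Rightarrow> nat \<Rightarrow> (nat \<Rightarrow> nat \<Rightarrow> rmpoly) \<Rightarrow> real vec \<Rightarrow> real mat" where
  "polymat_eval r c L x = mat r c (\<lambda>(i, k). mpoly_eval (L i k) x)"

end

theory Submission
  imports Defs
begin

text \<open>
  Nonsingularity only has to be tested at real points: since \<open>A\<close> and \<open>b\<close> are real, the real part of
  a complex point satisfies the same equations \<open>c\<^sub>j = 0\<close>. If at every real point the active rows are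
  independent, then by the Fredholm alternative every dependent set \<open>Z\<close> of rows carries a relation
  \<open>\<Sum> l\<^sub>j a\<^sub>j = 0\<close> with \<open>\<Sum> l\<^sub>j b\<^sub>j \<noteq> 0\<close>, so that \<open>\<Sum> l\<^sub>j c\<^sub>j\<close> is a nonzero constant. Dividing by it and
  recursing on the sets \<open>Z - {j}\<close> with \<open>l\<^sub>j \<noteq> 0\<close> writes \<open>1\<close> as a combination of the products of
  the \<open>c\<^sub>j\<close> over \<open>j \<notin> Z\<close>, where each \<open>Z\<close> is an independent set of rows that still spans all rows, so
  \<open>|Z| = rank A\<close>. For each such \<open>Z\<close>, a dual basis of its rows yields a polynomial matrix \<open>L\<^sub>Z\<close> of
  degree \<open>m - |Z|\<close> with \<open>L\<^sub>Z C\<close> equal to that product times \<open>I\<close>; the same combination of the \<open>L\<^sub>Z\<close> is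
  the required left inverse. Conversely, a left inverse forces \<open>C(x)\<close> to have trivial kernel.
\<close>

definition mpoly_const :: "real \<Rightarrow> rmpoly" where
  "mpoly_const c = Poly_Mapping.single 0 c"

definition mpoly_var :: "nat \<Rightarrow> rmpoly" where
  "mpoly_var k = Poly_Mapping.single (Poly_Mapping.single k 1) 1"

definition monomial_eval :: "(nat \<Rightarrow>\<^sub>0 nat) \<Rightarrow> real vec \<Rightarrow> real" where
  "monomial_eval \<alpha> x = (\<Prod>i\<in>Poly_Mapping.keys \<alpha>. (x $ i) ^ Poly_Mapping.lookup \<alpha> i)"

definition monomial_degree :: "(nat \<Rightarrow>\<^sub>0 nat) \<Rightarrow> nat" where
  "monomial_degree \<alpha> = (\<Sum>i\<in>Poly_Mapping.keys \<alpha>. Poly_Mapping.lookup \<alpha> i)"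

lemma monomial_eval_superset:
  assumes "finite S" "Poly_Mapping.keys \<alpha> \<subseteq> S"
  shows "monomial_eval \<alpha> x = (\<Prod>i\<in>S. (x $ i) ^ Poly_Mapping.lookup \<alpha> i)"
  unfolding monomial_eval_def
  by (rule prod.mono_neutral_left) (use assms in \<open>auto simp: in_keys_iff\<close>)

lemma monomial_degree_superset:
  assumes "finite S" "Poly_Mapping.keys \<alpha> \<subseteq> S"
  shows "monomial_degree \<alpha> = (\<Sum>i\<in>S. Poly_Mapping.lookup \<alpha> i)"
  unfolding monomial_degree_def
  by (rule sum.mono_neutral_left) (use assms in \<open>auto simp: in_keys_iff\<close>)

lemma monomial_eval_add: "monomial_eval (\<alpha> + \<beta>) x = monomial_eval \<alpha> x * monomial_eval \<beta> x"
proof -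
  let ?S = "Poly_Mapping.keys \<alpha> \<union> Poly_Mapping.keys \<beta>"
  have "monomial_eval (\<alpha> + \<beta>) x = (\<Prod>i\<in>?S. (x $ i) ^ Poly_Mapping.lookup (\<alpha> + \<beta>) i)"
    by (rule monomial_eval_superset) (auto simp: keys_add)
  also have "\<dots> = (\<Prod>i\<in>?S. (x $ i) ^ Poly_Mapping.lookup \<alpha> i) * (\<Prod>i\<in>?S. (x $ i) ^ Poly_Mapping.lookup \<beta> i)"
    by (simp add: lookup_add power_add prod.distrib)
  also have "\<dots> = monomial_eval \<alpha> x * monomial_eval \<beta> x"
    by (simp add: monomial_eval_superset[symmetric])
  finally show ?thesis .
qed

lemma monomial_degree_add: "monomial_degree (\<alpha> + \<beta>) = monomial_degree \<alpha> + monomial_degree \<beta>"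
proof -
  let ?S = "Poly_Mapping.keys \<alpha> \<union> Poly_Mapping.keys \<beta>"
  have "monomial_degree (\<alpha> + \<beta>) = (\<Sum>i\<in>?S. Poly_Mapping.lookup (\<alpha> + \<beta>) i)"
    by (rule monomial_degree_superset) (auto simp: keys_add)
  also have "\<dots> = (\<Sum>i\<in>?S. Poly_Mapping.lookup \<alpha> i) + (\<Sum>i\<in>?S. Poly_Mapping.lookup \<beta> i)"
    by (simp add: lookup_add sum.distrib)
  also have "\<dots> = monomial_degree \<alpha> + monomial_degree \<beta>"
    by (simp add: monomial_degree_superset[symmetric])
  finally show ?thesis .
qed

lemma mpoly_eval_superset:
  assumes "finite S" "Poly_Mapping.keys p \<subseteq> S"
  shows "mpoly_eval p x = (\<Sum>\<alpha>\<in>S. Poly_Mapping.lookup p \<alpha> * monomial_eval \<alpha> x)"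
  unfolding mpoly_eval_def monomial_eval_def[symmetric]
  by (rule sum.mono_neutral_left) (use assms in \<open>auto simp: in_keys_iff\<close>)

lemma mpoly_eval_zero [simp]: "mpoly_eval 0 x = 0"
  by (simp add: mpoly_eval_def)

lemma mpoly_eval_add: "mpoly_eval (p + q) x = mpoly_eval p x + mpoly_eval q x"
proof -
  let ?S = "Poly_Mapping.keys p \<union> Poly_Mapping.keys q"
  have "mpoly_eval (p + q) x = (\<Sum>\<alpha>\<in>?S. Poly_Mapping.lookup (p + q) \<alpha> * monomial_eval \<alpha> x)"
    by (rule mpoly_eval_superset) (auto simp: keys_add)
  also have "\<dots> = (\<Sum>\<alpha>\<in>?S. Poly_Mapping.lookup p \<alpha> * monomial_eval \<alpha> x)
                + (\<Sum>\<alpha>\<in>?S. Poly_Mapping.lookup q \<alpha> * monomial_eval \<alpha> x)"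
    by (simp add: lookup_add distrib_right sum.distrib)
  also have "\<dots> = mpoly_eval p x + mpoly_eval q x"
    by (simp add: mpoly_eval_superset[symmetric])
  finally show ?thesis .
qed

lemma mpoly_eval_sum: "mpoly_eval (\<Sum>i\<in>S. f i) x = (\<Sum>i\<in>S. mpoly_eval (f i) x)"
  by (induction S rule: infinite_finite_induct) (auto simp: mpoly_eval_add)

lemma mpoly_eval_single: "mpoly_eval (Poly_Mapping.single \<alpha> c) x = c * monomial_eval \<alpha> x"
  by (cases "c = 0") (simp_all add: mpoly_eval_def monomial_eval_def)

lemma poly_mapping_sum_single:
  "p = (\<Sum>\<alpha>\<in>Poly_Mapping.keys p. Poly_Mapping.single \<alpha> (Poly_Mapping.lookup p \<alpha>))"
  by (rule poly_mapping_eqI) (simp add: lookup_sum lookup_single when_def in_keys_iff)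

lemma mpoly_eval_mult: "mpoly_eval (p * q) x = mpoly_eval p x * mpoly_eval q x"
proof -
  let ?P = "Poly_Mapping.keys p" and ?Q = "Poly_Mapping.keys q"
  have "p * q = (\<Sum>\<alpha>\<in>?P. Poly_Mapping.single \<alpha> (Poly_Mapping.lookup p \<alpha>))
              * (\<Sum>\<beta>\<in>?Q. Poly_Mapping.single \<beta> (Poly_Mapping.lookup q \<beta>))"
    by (simp add: poly_mapping_sum_single[symmetric])
  also have "\<dots> = (\<Sum>\<alpha>\<in>?P. \<Sum>\<beta>\<in>?Q.
                    Poly_Mapping.single (\<alpha> + \<beta>) (Poly_Mapping.lookup p \<alpha> * Poly_Mapping.lookup q \<beta>))"
    by (simp add: sum_product mult_single)
  finally have "mpoly_eval (p * q) x = (\<Sum>\<alpha>\<in>?P. \<Sum>\<beta>\<in>?Q.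
      (Poly_Mapping.lookup p \<alpha> * monomial_eval \<alpha> x) * (Poly_Mapping.lookup q \<beta> * monomial_eval \<beta> x))"
    by (simp add: mpoly_eval_sum mpoly_eval_single monomial_eval_add mult_ac)
  also have "\<dots> = mpoly_eval p x * mpoly_eval q x"
    by (simp only: mpoly_eval_def monomial_eval_def[symmetric] sum_product)
  finally show ?thesis .
qed

lemma mpoly_eval_one [simp]: "mpoly_eval 1 x = 1"
  by (simp add: mpoly_eval_def)

lemma mpoly_eval_prod: "mpoly_eval (\<Prod>i\<in>S. f i) x = (\<Prod>i\<in>S. mpoly_eval (f i) x)"
  by (induction S rule: infinite_finite_induct) (auto simp: mpoly_eval_mult)

lemma mpoly_eval_const [simp]: "mpoly_eval (mpoly_const c) x = c"
  by (simp add: mpoly_const_def mpoly_eval_single monomial_eval_def)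

lemma mpoly_eval_var [simp]: "mpoly_eval (mpoly_var k) x = x $ k"
  by (simp add: mpoly_var_def mpoly_eval_single monomial_eval_def)

definition mpoly_bounded :: "nat \<Rightarrow> nat \<Rightarrow> rmpoly \<Rightarrow> bool" where
  "mpoly_bounded n d p \<longleftrightarrow>
     (\<forall>\<alpha>\<in>Poly_Mapping.keys p. Poly_Mapping.keys \<alpha> \<subseteq> {..<n} \<and> monomial_degree \<alpha> \<le> d)"

lemma mpoly_bounded_imp_vars_below: "mpoly_bounded n d p \<Longrightarrow> mpoly_vars_below n p"
  unfolding mpoly_bounded_def mpoly_vars_below_def by auto

lemma mpoly_bounded_imp_degree_le: "mpoly_bounded n d p \<Longrightarrow> mpoly_degree p \<le> d"
  unfolding mpoly_bounded_def mpoly_degree_def monomial_degree_def[symmetric]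
  by (subst Max_le_iff) auto

lemma mpoly_bounded_mono: "mpoly_bounded n d p \<Longrightarrow> d \<le> d' \<Longrightarrow> mpoly_bounded n d' p"
  unfolding mpoly_bounded_def by force

lemma mpoly_bounded_zero [simp]: "mpoly_bounded n d 0"
  by (simp add: mpoly_bounded_def)

lemma mpoly_bounded_one [simp]: "mpoly_bounded n d 1"
  by (simp add: mpoly_bounded_def monomial_degree_def)

lemma mpoly_bounded_const [simp]: "mpoly_bounded n d (mpoly_const c)"
  by (simp add: mpoly_bounded_def mpoly_const_def monomial_degree_def)

lemma mpoly_bounded_var: "k < n \<Longrightarrow> mpoly_bounded n 1 (mpoly_var k)"
  by (simp add: mpoly_bounded_def mpoly_var_def monomial_degree_def)

lemma mpoly_bounded_add:
  "mpoly_bounded n d p \<Longrightarrow> mpoly_bounded n d q \<Longrightarrow> mpoly_bounded n d (p + q)"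
  unfolding mpoly_bounded_def using keys_add[of p q] by blast

lemma mpoly_bounded_mult:
  assumes "mpoly_bounded n d p" "mpoly_bounded n e q"
  shows "mpoly_bounded n (d + e) (p * q)"
  unfolding mpoly_bounded_def
proof
  fix \<gamma> assume "\<gamma> \<in> Poly_Mapping.keys (p * q)"
  then obtain \<alpha> \<beta> where "\<gamma> = \<alpha> + \<beta>" "\<alpha> \<in> Poly_Mapping.keys p" "\<beta> \<in> Poly_Mapping.keys q"
    using keys_mult[of p q] by blast
  with assms keys_add[of \<alpha> \<beta>] show "Poly_Mapping.keys \<gamma> \<subseteq> {..<n} \<and> monomial_degree \<gamma> \<le> d + e"
    unfolding mpoly_bounded_def by (fastforce simp: monomial_degree_add)
qed

lemma mpoly_bounded_const_mult: "mpoly_bounded n d p \<Longrightarrow> mpoly_bounded n d (mpoly_const c * p)"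
  using mpoly_bounded_mult[of n 0 "mpoly_const c" d p] by simp

lemma mpoly_bounded_sum:
  "(\<And>i. i \<in> S \<Longrightarrow> mpoly_bounded n d (f i)) \<Longrightarrow> mpoly_bounded n d (\<Sum>i\<in>S. f i)"
  by (induction S rule: infinite_finite_induct) (auto intro: mpoly_bounded_add)

lemma mpoly_bounded_prod:
  "(\<And>i. i \<in> S \<Longrightarrow> mpoly_bounded n 1 (f i)) \<Longrightarrow> mpoly_bounded n (card S) (\<Prod>i\<in>S. f i)"
proof (induction S rule: infinite_finite_induct)
  case (insert i S)
  then have "mpoly_bounded n (1 + card S) (f i * prod f S)"
    by (intro mpoly_bounded_mult) auto
  with insert.hyps show ?case by simp
qed simp_all

definition affine_form :: "nat \<Rightarrow> ('i \<Rightarrow> nat \<Rightarrow> 'a::comm_ring_1) \<Rightarrow> ('i \<Rightarrow> 'a) \<Rightarrow> 'i \<Rightarrow> (nat \<Rightarrow> 'a) \<Rightarrow> 'a" where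
  "affine_form n a b j x = (\<Sum>k<n. a j k * x k) - b j"

definition rows_indpt :: "nat \<Rightarrow> ('i \<Rightarrow> nat \<Rightarrow> 'a::comm_ring_1) \<Rightarrow> 'i set \<Rightarrow> bool" where
  "rows_indpt n a Z \<longleftrightarrow> (\<forall>l. (\<forall>k<n. (\<Sum>j\<in>Z. l j * a j k) = 0) \<longrightarrow> (\<forall>j\<in>Z. l j = 0))"

definition rows_span :: "nat \<Rightarrow> ('i \<Rightarrow> nat \<Rightarrow> 'a::comm_ring_1) \<Rightarrow> 'i set \<Rightarrow> 'i set \<Rightarrow> bool" where
  "rows_span n a I Z \<longleftrightarrow> (\<forall>i\<in>I. \<exists>\<mu>. \<forall>k<n. a i k = (\<Sum>j\<in>Z. \<mu> j * a j k))"

text \<open>One step of Gaussian elimination: column \<open>n\<close> is cleared with the pivot row \<open>p\<close>, and solutions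
  and certificates of the reduced system lift back to the original one.\<close>

lemma pivot_solution_lift:
  fixes a :: "'i \<Rightarrow> nat \<Rightarrow> 'a::field"
  assumes pivot: "a p n \<noteq> 0"
    and reduced: "(\<Sum>k<n. (a j k - a j n / a p n * a p k) * z k) = y j - a j n / a p n * y p"
  shows "(\<Sum>k<Suc n. a j k * (z(n := (y p - (\<Sum>k<n. a p k * z k)) / a p n)) k) = y j"
proof -
  define t where "t = a j n / a p n"
  define s where "s = (\<Sum>k<n. a p k * z k)"
  have row: "(\<Sum>k<n. a j k * z k) = y j - t * y p + t * s"
    using reduced by (simp add: t_def s_def algebra_simps sum_subtractf sum_distrib_left)
  have pivot_entry: "a j n * ((y p - s) / a p n) = t * (y p - s)"
    using pivot by (simp add: t_def)
  have "(\<Sum>k<Suc n. a j k * (z(n := (y p - s) / a p n)) k)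
      = (\<Sum>k<n. a j k * z k) + a j n * ((y p - s) / a p n)"
    by simp
  also have "\<dots> = y j"
    unfolding row pivot_entry by (simp add: algebra_simps)
  finally show ?thesis
    by (simp add: s_def)
qed

lemma pivot_certificate_lift:
  fixes a :: "'i \<Rightarrow> nat \<Rightarrow> 'a::field"
  assumes "finite I" "p \<in> I" and pivot: "a p n \<noteq> 0"
    and reduced: "\<forall>k<n. (\<Sum>j\<in>I. l j * (a j k - a j n / a p n * a p k)) = 0"
      "(\<Sum>j\<in>I. l j * (y j - a j n / a p n * y p)) \<noteq> 0"
  shows "\<exists>l'. (\<forall>k<Suc n. (\<Sum>j\<in>I. l' j * a j k) = 0) \<and> (\<Sum>j\<in>I. l' j * y j) \<noteq> 0"
proof -
  define t where "t j = a j n / a p n" for j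
  define T where "T = (\<Sum>j\<in>I. l j * t j)"
  define l' where "l' j = l j - (if j = p then T else 0)" for j
  have shift: "(\<Sum>j\<in>I. l' j * v j) = (\<Sum>j\<in>I. l j * (v j - t j * v p))" for v
  proof -
    have "(\<Sum>j\<in>I. (if j = p then T else 0) * v j) = T * v p"
      by (subst sum.remove[OF assms(1,2)]) simp_all
    then show ?thesis
      by (simp add: l'_def T_def left_diff_distrib right_diff_distrib sum_subtractf
          sum_distrib_right mult.assoc)
  qed
  have "t j * a p n = a j n" for j
    using pivot by (simp add: t_def)
  then have "(\<Sum>j\<in>I. l' j * a j n) = 0"
    using shift[of "\<lambda>j. a j n"] by simp
  with reduced shift have "\<forall>k<Suc n. (\<Sum>j\<in>I. l' j * a j k) = 0"
    by (auto simp: less_Suc_eq t_def)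
  moreover have "(\<Sum>j\<in>I. l' j * y j) \<noteq> 0"
    using reduced shift by (simp add: t_def)
  ultimately show ?thesis by blast
qed

lemma fredholm_alternative:
  fixes a :: "'i \<Rightarrow> nat \<Rightarrow> 'a::field" and y :: "'i \<Rightarrow> 'a"
  assumes "finite I"
  shows "(\<exists>z. \<forall>j\<in>I. (\<Sum>k<n. a j k * z k) = y j) \<or>
         (\<exists>l. (\<forall>k<n. (\<Sum>j\<in>I. l j * a j k) = 0) \<and> (\<Sum>j\<in>I. l j * y j) \<noteq> 0)"
proof (induction n arbitrary: a y)
  case 0
  show ?case
  proof (cases "\<exists>p\<in>I. y p \<noteq> 0")
    case True
    then obtain p where "p \<in> I" "y p \<noteq> 0" by blast
    then have "(\<Sum>j\<in>I. (if j = p then 1 else 0) * y j) \<noteq> 0"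
      using assms by (simp add: if_distrib[of "\<lambda>u. u * y _"] cong: if_cong)
    then show ?thesis by auto
  qed auto
next
  case (Suc n)
  show ?case
  proof (cases "\<exists>p\<in>I. a p n \<noteq> 0")
    case False
    with Suc.IH[of a y] show ?thesis by (auto simp: less_Suc_eq)
  next
    case True
    then obtain p where p: "p \<in> I" "a p n \<noteq> 0" by blast
    define t where "t j = a j n / a p n" for j
    from Suc.IH[of "\<lambda>j k. a j k - t j * a p k" "\<lambda>j. y j - t j * y p"] show ?thesis
    proof (elim disjE exE)
      fix z assume z: "\<forall>j\<in>I. (\<Sum>k<n. (a j k - t j * a p k) * z k) = y j - t j * y p"
      have "(\<Sum>k<Suc n. a j k * (z(n := (y p - (\<Sum>k<n. a p k * z k)) / a p n)) k) = y j"
        if "j \<in> I" for j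
        by (rule pivot_solution_lift[where a = a, OF p(2)]) (use z that in \<open>simp add: t_def\<close>)
      then show ?thesis by blast
    next
      fix l assume "(\<forall>k<n. (\<Sum>j\<in>I. l j * (a j k - t j * a p k)) = 0) \<and>
                    (\<Sum>j\<in>I. l j * (y j - t j * y p)) \<noteq> 0"
      then show ?thesis
        using pivot_certificate_lift[where a = a, OF assms p] unfolding t_def by blast
    qed
  qed
qed

lemma rows_indpt_subset:
  assumes "rows_indpt n a Z" "Z' \<subseteq> Z" "finite Z"
  shows "rows_indpt n a Z'"
  unfolding rows_indpt_def
proof (intro allI impI ballI)
  fix l j assume rel: "\<forall>k<n. (\<Sum>j\<in>Z'. l j * a j k) = 0" and j: "j \<in> Z'"
  define l' where "l' j = (if j \<in> Z' then l j else 0)" for j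
  have "(\<Sum>j\<in>Z. l' j * a j k) = (\<Sum>j\<in>Z'. l j * a j k)" for k
    using assms(2,3) by (simp add: l'_def if_distrib[of "\<lambda>u. u * a _ k"] sum.If_cases Int_absorb1)
  then have "l' j = 0"
    using assms(1) rel j assms(2) unfolding rows_indpt_def by (metis subsetD)
  with j show "l j = 0" by (simp add: l'_def)
qed

lemma rows_span_refl:
  assumes "finite I"
  shows "rows_span n a I I"
  unfolding rows_span_def
proof
  fix i assume "i \<in> I"
  then have "a i k = (\<Sum>j\<in>I. (if j = i then 1 else 0) * a j k)" for k
    using assms by (simp add: if_distrib[of "\<lambda>u. u * a _ _"] cong: if_cong)
  then show "\<exists>\<mu>. \<forall>k<n. a i k = (\<Sum>j\<in>I. \<mu> j * a j k)"
    by (intro exI[of _ "\<lambda>j. if j = i then 1 else 0"]) blast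
qed

lemma rows_span_remove:
  fixes a :: "'i \<Rightarrow> nat \<Rightarrow> 'a::field"
  assumes span: "rows_span n a I Z" and "finite Z" "p \<in> Z"
    and rel: "\<forall>k<n. (\<Sum>j\<in>Z. l j * a j k) = 0" and "l p \<noteq> 0"
  shows "rows_span n a I (Z - {p})"
  unfolding rows_span_def
proof
  fix i assume "i \<in> I"
  then obtain \<mu> where \<mu>: "\<forall>k<n. a i k = (\<Sum>j\<in>Z. \<mu> j * a j k)"
    using span unfolding rows_span_def by blast
  define \<mu>' where "\<mu>' j = \<mu> j - \<mu> p / l p * l j" for j
  have "a i k = (\<Sum>j\<in>Z - {p}. \<mu>' j * a j k)" if "k < n" for k
  proof -
    have "(\<Sum>j\<in>Z. \<mu>' j * a j k) = (\<Sum>j\<in>Z. \<mu> j * a j k) - \<mu> p / l p * (\<Sum>j\<in>Z. l j * a j k)"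
      by (simp add: \<mu>'_def left_diff_distrib sum_subtractf sum_distrib_left mult.assoc)
    also have "\<dots> = a i k"
      using \<mu> rel that by simp
    finally show ?thesis
      using assms(2-5) by (simp add: sum.remove \<mu>'_def)
  qed
  then show "\<exists>\<mu>. \<forall>k<n. a i k = (\<Sum>j\<in>Z - {p}. \<mu> j * a j k)" by blast
qed

lemma rows_indpt_dual:
  fixes a :: "'i \<Rightarrow> nat \<Rightarrow> 'a::field"
  assumes "finite Z" "rows_indpt n a Z"
  shows "\<exists>d. \<forall>i\<in>Z. \<forall>j\<in>Z. (\<Sum>k<n. a j k * d i k) = (if j = i then 1 else 0)"
proof -
  have "\<exists>z. \<forall>j\<in>Z. (\<Sum>k<n. a j k * z k) = (if j = i then 1 else 0)" if i: "i \<in> Z" for i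
  proof -
    have "(\<Sum>j\<in>Z. l j * (if j = i then 1 else 0)) = 0"
      if "\<forall>k<n. (\<Sum>j\<in>Z. l j * a j k) = 0" for l
      using assms(2) that unfolding rows_indpt_def by simp
    then show ?thesis
      using fredholm_alternative[OF assms(1), where n = n and a = a and y = "\<lambda>j. if j = i then 1 else 0"] by blast
  qed
  then have "\<forall>i\<in>Z. \<exists>z. \<forall>j\<in>Z. (\<Sum>k<n. a j k * z k) = (if j = i then 1 else 0)"
    by blast
  then show ?thesis by (rule bchoice)
qed

lemma affine_form_relation:
  assumes "\<forall>k<n. (\<Sum>j\<in>Z. l j * a j k) = 0"
  shows "(\<Sum>j\<in>Z. l j * affine_form n a b j x) = - (\<Sum>j\<in>Z. l j * b j)"
proof -
  have "(\<Sum>j\<in>Z. l j * affine_form n a b j x)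
      = (\<Sum>k<n. (\<Sum>j\<in>Z. l j * a j k) * x k) - (\<Sum>j\<in>Z. l j * b j)"
    by (simp add: affine_form_def right_diff_distrib sum_subtractf sum_distrib_left
        sum_distrib_right sum.swap[of _ Z] mult_ac)
  with assms show ?thesis by simp
qed

lemma dependent_rows_certificate:
  fixes a :: "'i \<Rightarrow> nat \<Rightarrow> 'a::field"
  assumes ns: "\<And>z. rows_indpt n a {j\<in>I. affine_form n a b j z = 0}"
    and "finite I" "Z \<subseteq> I" "\<not> rows_indpt n a Z"
  shows "\<exists>l. (\<forall>k<n. (\<Sum>j\<in>Z. l j * a j k) = 0) \<and> (\<Sum>j\<in>Z. l j * b j) \<noteq> 0"
proof -
  have "finite Z" using assms(2,3) by (rule finite_subset[rotated])
  from fredholm_alternative[OF this, where n = n and a = a and y = b] show ?thesis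
  proof (elim disjE exE)
    fix z assume "\<forall>j\<in>Z. (\<Sum>k<n. a j k * z k) = b j"
    then have "Z \<subseteq> {j\<in>I. affine_form n a b j z = 0}"
      using assms(3) by (auto simp: affine_form_def)
    then have "rows_indpt n a Z"
      by (rule rows_indpt_subset[OF ns]) (use assms(2) in simp)
    with assms(4) show ?thesis by contradiction
  qed blast
qed

lemma sum_Pow_extract_factor:
  fixes g :: "'i \<Rightarrow> 'a::comm_ring_1"
  assumes "finite Z" "j \<in> Z" and supp: "\<And>Z'. f Z' \<noteq> 0 \<Longrightarrow> Z' \<subseteq> Z - {j}"
  shows "(\<Sum>Z'\<in>Pow Z. f Z' * (\<Prod>i\<in>Z - Z'. g i))
       = g j * (\<Sum>Z'\<in>Pow (Z - {j}). f Z' * (\<Prod>i\<in>Z - {j} - Z'. g i))"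
proof -
  have "(\<Sum>Z'\<in>Pow Z. f Z' * (\<Prod>i\<in>Z - Z'. g i)) = (\<Sum>Z'\<in>Pow (Z - {j}). f Z' * (\<Prod>i\<in>Z - Z'. g i))"
  proof (rule sum.mono_neutral_right)
    show "\<forall>Z'\<in>Pow Z - Pow (Z - {j}). f Z' * (\<Prod>i\<in>Z - Z'. g i) = 0"
    proof
      fix Z' assume "Z' \<in> Pow Z - Pow (Z - {j})"
      then have "f Z' = 0" using supp by blast
      then show "f Z' * (\<Prod>i\<in>Z - Z'. g i) = 0" by simp
    qed
  qed (use assms(1) in auto)
  also have "\<dots> = (\<Sum>Z'\<in>Pow (Z - {j}). g j * (f Z' * (\<Prod>i\<in>Z - {j} - Z'. g i)))"
  proof (rule sum.cong[OF refl])
    fix Z' assume "Z' \<in> Pow (Z - {j})"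
    then have "j \<in> Z - Z'" using assms(2) by auto
    then have "(\<Prod>i\<in>Z - Z'. g i) = g j * (\<Prod>i\<in>Z - Z' - {j}. g i)"
      using assms(1) by (simp add: prod.remove)
    also have "Z - Z' - {j} = Z - {j} - Z'" by blast
    finally show "f Z' * (\<Prod>i\<in>Z - Z'. g i) = g j * (f Z' * (\<Prod>i\<in>Z - {j} - Z'. g i))"
      by (simp add: mult.left_commute)
  qed
  finally show ?thesis
    by (simp add: sum_distrib_left)
qed

definition unity_combination ::
    "nat \<Rightarrow> ('i \<Rightarrow> nat \<Rightarrow> 'a::comm_ring_1) \<Rightarrow> ('i \<Rightarrow> 'a) \<Rightarrow> ('i set \<Rightarrow> bool) \<Rightarrow> 'i set \<Rightarrow> ('i set \<Rightarrow> 'a) \<Rightarrow> bool"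
  where "unity_combination n a b P Z \<alpha> \<longleftrightarrow>
    (\<forall>Z'. \<alpha> Z' \<noteq> 0 \<longrightarrow> Z' \<subseteq> Z \<and> P Z') \<and>
    (\<forall>x. (\<Sum>Z'\<in>Pow Z. \<alpha> Z' * (\<Prod>j\<in>Z - Z'. affine_form n a b j x)) = 1)"

lemma unity_combination_step:
  fixes a :: "'i \<Rightarrow> nat \<Rightarrow> 'a::field"
  assumes "finite Z"
    and rel: "\<forall>k<n. (\<Sum>j\<in>Z. l j * a j k) = 0" and const: "(\<Sum>j\<in>Z. l j * b j) \<noteq> 0"
    and IH: "\<And>j. j \<in> Z \<Longrightarrow> l j \<noteq> 0 \<Longrightarrow> \<exists>\<alpha>. unity_combination n a b P (Z - {j}) \<alpha>"
  shows "\<exists>\<alpha>. unity_combination n a b P Z \<alpha>"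
proof -
  define J where "J = {j\<in>Z. l j \<noteq> 0}"
  define \<beta> where "\<beta> = (\<Sum>j\<in>Z. l j * b j)"
  have "\<forall>j\<in>J. \<exists>\<alpha>. unity_combination n a b P (Z - {j}) \<alpha>"
    using IH by (simp add: J_def)
  then obtain \<alpha> where \<alpha>: "\<forall>j\<in>J. unity_combination n a b P (Z - {j}) (\<alpha> j)"
    by (metis bchoice)
  define \<gamma> where "\<gamma> Z' = (\<Sum>j\<in>J. - l j / \<beta> * \<alpha> j Z')" for Z'
  have "Z' \<subseteq> Z \<and> P Z'" if nonzero: "\<gamma> Z' \<noteq> 0" for Z'
  proof -
    obtain j where "j \<in> J" "- l j / \<beta> * \<alpha> j Z' \<noteq> 0"
      using nonzero sum.not_neutral_contains_not_neutral unfolding \<gamma>_def by blast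
    then show ?thesis using \<alpha> by (auto simp: unity_combination_def)
  qed
  moreover have "(\<Sum>Z'\<in>Pow Z. \<gamma> Z' * (\<Prod>i\<in>Z - Z'. affine_form n a b i x)) = 1" for x
  proof -
    have "(\<Sum>Z'\<in>Pow Z. \<gamma> Z' * (\<Prod>i\<in>Z - Z'. affine_form n a b i x))
        = (\<Sum>j\<in>J. - l j / \<beta> * (\<Sum>Z'\<in>Pow Z. \<alpha> j Z' * (\<Prod>i\<in>Z - Z'. affine_form n a b i x)))"
      unfolding \<gamma>_def sum_distrib_right sum_distrib_left mult.assoc by (rule sum.swap)
    also have "\<dots> = (\<Sum>j\<in>J. - l j / \<beta> * affine_form n a b j x)"
    proof (rule sum.cong[OF refl])
      fix j assume "j \<in> J"
      then have "j \<in> Z" by (simp add: J_def)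
      with \<alpha> \<open>j \<in> J\<close> show "- l j / \<beta> * (\<Sum>Z'\<in>Pow Z. \<alpha> j Z' * (\<Prod>i\<in>Z - Z'. affine_form n a b i x))
          = - l j / \<beta> * affine_form n a b j x"
        by (simp add: sum_Pow_extract_factor[OF \<open>finite Z\<close>] unity_combination_def)
    qed
    also have "\<dots> = - (\<Sum>j\<in>Z. l j * affine_form n a b j x) / \<beta>"
      by (subst sum.mono_neutral_left[of Z J])
        (use \<open>finite Z\<close> in \<open>auto simp: J_def sum_divide_distrib sum_negf\<close>)
    also have "\<dots> = 1"
      using affine_form_relation[OF rel] const by (simp add: \<beta>_def)
    finally show ?thesis .
  qed
  ultimately show ?thesis
    unfolding unity_combination_def by blast
qed

lemma unity_combination_over_bases:
  fixes a :: "'i \<Rightarrow> nat \<Rightarrow> 'a::field"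
  assumes ns: "\<And>z. rows_indpt n a {j\<in>I. affine_form n a b j z = 0}" and "finite I"
  shows "Z \<subseteq> I \<Longrightarrow> rows_span n a I Z \<Longrightarrow>
    \<exists>\<alpha>. unity_combination n a b (\<lambda>Z'. rows_indpt n a Z' \<and> rows_span n a I Z') Z \<alpha>"
proof (induction "card Z" arbitrary: Z rule: less_induct)
  case less
  have "finite Z" using less.prems(1) \<open>finite I\<close> by (rule finite_subset)
  show ?case
  proof (cases "rows_indpt n a Z")
    case True
    define \<alpha> where "\<alpha> Z' = (if Z' = Z then 1 else 0 :: 'a)" for Z'
    have "(\<Sum>Z'\<in>Pow Z. \<alpha> Z' * (\<Prod>j\<in>Z - Z'. affine_form n a b j x)) = 1" for x
      using \<open>finite Z\<close> by (simp add: \<alpha>_def if_distrib[of "\<lambda>u. u * _"] cong: if_cong)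
    with True less.prems(2) show ?thesis
      by (intro exI[of _ \<alpha>]) (auto simp: \<alpha>_def unity_combination_def)
  next
    case False
    then obtain l where rel: "\<forall>k<n. (\<Sum>j\<in>Z. l j * a j k) = 0" and "(\<Sum>j\<in>Z. l j * b j) \<noteq> 0"
      using dependent_rows_certificate[OF ns \<open>finite I\<close> less.prems(1)] by blast
    then show ?thesis
    proof (rule unity_combination_step[OF \<open>finite Z\<close>])
      fix j assume "j \<in> Z" "l j \<noteq> 0"
      have "card (Z - {j}) < card Z"
        using \<open>finite Z\<close> \<open>j \<in> Z\<close> by (rule card_Diff1_less)
      moreover have "Z - {j} \<subseteq> I"
        using less.prems(1) by blast
      moreover have "rows_span n a I (Z - {j})"
        by (rule rows_span_remove[OF less.prems(2) \<open>finite Z\<close> \<open>j \<in> Z\<close> rel \<open>l j \<noteq> 0\<close>])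
      ultimately show "\<exists>\<alpha>. unity_combination n a b
          (\<lambda>Z'. rows_indpt n a Z' \<and> rows_span n a I Z') (Z - {j}) \<alpha>"
        by (rule less.hyps)
    qed
  qed
qed

lemma (in vec_space) col_space_mult_subset:
  assumes T: "T \<in> carrier_mat n p" and B: "B \<in> carrier_mat p nc"
  shows "span (set (cols (T * B))) \<subseteq> span (set (cols T))"
proof
  have TB: "T * B \<in> carrier_mat n nc" using T B by simp
  fix y assume "y \<in> span (set (cols (T * B)))"
  then obtain x where x: "x \<in> carrier_vec nc" and y: "y = (T * B) *\<^sub>v x"
    using col_space_eq[OF TB] TB unfolding col_space_def by auto
  have "y = T *\<^sub>v (B *\<^sub>v x)"
    unfolding y by (rule assoc_mult_mat_vec[OF T B x])
  moreover have "B *\<^sub>v x \<in> carrier_vec p" using B x by simp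
  ultimately have "y \<in> col_space T"
    using col_space_eq[OF T] T by auto
  then show "y \<in> span (set (cols T))" by (simp add: col_space_def)
qed

lemma (in vec_space) rank_mult_le_inner_dim:
  assumes T: "T \<in> carrier_mat n p" and B: "B \<in> carrier_mat p nc"
  shows "rank (T * B) \<le> p"
proof -
  have TB: "T * B \<in> carrier_mat n nc" using T B by simp
  have sT: "subspace class_ring (span (set (cols T))) V"
    by (rule span_is_subspace) (use cols_dim[of T] T in simp)
  have sTB: "subspace class_ring (span (set (cols (T * B)))) V"
    by (rule span_is_subspace) (use cols_dim[of "T * B"] T in simp)
  have nested: "subspace class_ring (span (set (cols (T * B)))) (vs (span (set (cols T))))"
    using nested_subspaces[OF sT sTB col_space_mult_subset[OF T B]] .
  have "vectorspace.fin_dim class_ring ((vs (span (set (cols T))))\<lparr>carrier := span (set (cols (T * B)))\<rparr>)"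
    using fin_dim_span_cols[OF TB] by simp
  then have "rank (T * B) \<le> rank T"
    using vectorspace.subspace_dim[OF subspace_is_vs[OF sT] nested fin_dim_span_cols[OF T]]
    unfolding rank_def by simp
  also have "rank T \<le> p" using rank_le_nc[OF T] .
  finally show ?thesis .
qed

lemma (in vec_space) rank_less_if_cols_not_distinct:
  assumes A: "A \<in> carrier_mat n nc" and "\<not> distinct (cols A)"
  shows "rank A < nc"
proof -
  obtain S where S: "maximal S (\<lambda>T. T \<subseteq> set (cols A) \<and> lin_indpt T)"
    using maximal_exists[of "(\<lambda>T. T \<subseteq> set (cols A) \<and> lin_indpt T)" "card (set (cols A))" "{}"]
    by (meson List.finite_set card_mono empty_iff empty_subsetI finite_lin_indpt2 rev_finite_subset)
  then have "card S \<le> card (set (cols A))" by (simp add: card_mono maximal_def)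
  also have "card (set (cols A)) < length (cols A)"
    using assms(2) card_length card_distinct by (metis le_neq_implies_less)
  finally show ?thesis
    using rank_card_indpt[OF A S] A by simp
qed

lemma distinct_cols_if_kernel_trivial:
  fixes A :: "'a::comm_ring_1 mat"
  assumes A: "A \<in> carrier_mat n nc" and ker: "\<forall>v\<in>carrier_vec nc. A *\<^sub>v v = 0\<^sub>v n \<longrightarrow> v = 0\<^sub>v nc"
  shows "distinct (cols A)"
proof (rule ccontr)
  assume "\<not> distinct (cols A)"
  then obtain i j where ij: "i < nc" "j < nc" "i \<noteq> j" "col A i = col A j"
    using A by (auto simp: distinct_conv_nth)
  define v :: "'a vec" where "v = unit_vec nc i - unit_vec nc j"
  have v: "v \<in> carrier_vec nc" by (simp add: v_def)
  have "A *\<^sub>v v = 0\<^sub>v n"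
  proof (rule eq_vecI)
    fix r assume "r < dim_vec (0\<^sub>v n)"
    then have r: "r < n" by simp
    have "(A *\<^sub>v v) $ r = row A r \<bullet> unit_vec nc i - row A r \<bullet> unit_vec nc j"
      using A r unfolding v_def by (simp add: scalar_prod_minus_distrib[where n = nc])
    also have "\<dots> = A $$ (r, i) - A $$ (r, j)"
      using A r ij by simp
    also have "A $$ (r, i) = A $$ (r, j)"
      using arg_cong[OF ij(4), of "\<lambda>c. c $ r"] A r ij(1,2) by simp
    finally show "(A *\<^sub>v v) $ r = 0\<^sub>v n $ r" using r by simp
  qed (use A in simp)
  moreover have "v $ i = 1" using ij by (simp add: v_def)
  ultimately show False
    using ker v ij(1) by force
qed

lemma (in vec_space) rank_eq_dim_col_iff_kernel_trivial:
  assumes A: "A \<in> carrier_mat n nc"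
  shows "rank A = nc \<longleftrightarrow> (\<forall>v\<in>carrier_vec nc. A *\<^sub>v v = 0\<^sub>v n \<longrightarrow> v = 0\<^sub>v nc)"
proof
  assume "rank A = nc"
  moreover from this have "distinct (cols A)"
    using rank_less_if_cols_not_distinct[OF A] by fastforce
  ultimately have "lin_indpt (set (cols A))"
    by (rule full_rank_lin_indpt[OF A])
  with lin_depI[OF A] \<open>distinct (cols A)\<close>
  show "\<forall>v\<in>carrier_vec nc. A *\<^sub>v v = 0\<^sub>v n \<longrightarrow> v = 0\<^sub>v nc" by blast
next
  assume ker: "\<forall>v\<in>carrier_vec nc. A *\<^sub>v v = 0\<^sub>v n \<longrightarrow> v = 0\<^sub>v nc"
  then have distinct: "distinct (cols A)"
    by (rule distinct_cols_if_kernel_trivial[OF A])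
  moreover have "lin_indpt (set (cols A))"
    using lin_depE[OF A _ distinct] ker by blast
  ultimately show "rank A = nc"
    by (rule lin_indpt_full_rank[OF A])
qed

lemma sum_lessThan_add: "(\<Sum>k<n + m. f k) = (\<Sum>k<n. f k) + (\<Sum>t<m. f (n + t))"
  for n m :: nat
  by (induction m) (auto simp: add.assoc)

lemma row_scalar_prod_sum:
  assumes "A \<in> carrier_mat m n" "x \<in> carrier_vec n"
  shows "row A j \<bullet> x = (\<Sum>k<n. A $$ (j, k) * x $ k)"
  using assms by (simp add: scalar_prod_def atLeast0LessThan row_def)

lemma Cmat_carrier: "A \<in> carrier_mat m n \<Longrightarrow> Cmat A b x \<in> carrier_mat (n + m) m"
  by (simp add: Cmat_def)

lemma Cmat_mult_vec_upper:
  assumes "A \<in> carrier_mat m n" "w \<in> carrier_vec m" "k < n"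
  shows "(Cmat A b x *\<^sub>v w) $ k = (\<Sum>j<m. A $$ (j, k) * w $ j)"
  using assms by (simp add: Cmat_def scalar_prod_def atLeast0LessThan)

lemma Cmat_mult_vec_lower:
  assumes "A \<in> carrier_mat m n" "w \<in> carrier_vec m" "t < m"
  shows "(Cmat A b x *\<^sub>v w) $ (n + t) = (row A t \<bullet> x - b $ t) * w $ t"
proof -
  have "(Cmat A b x *\<^sub>v w) $ (n + t) = (\<Sum>j<m. (if t = j then row A j \<bullet> x - b $ j else 0) * w $ j)"
    using assms by (simp add: Cmat_def scalar_prod_def atLeast0LessThan)
  also have "\<dots> = (row A t \<bullet> x - b $ t) * w $ t"
    using assms(3) by (simp add: if_distrib[of "\<lambda>u. u * w $ _"] cong: if_cong)
  finally show ?thesis .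
qed

lemma Cmat_mult_vec_eq_0_iff:
  assumes A: "A \<in> carrier_mat m n" and w: "w \<in> carrier_vec m"
  shows "Cmat A b x *\<^sub>v w = 0\<^sub>v (n + m) \<longleftrightarrow>
           (\<forall>k<n. (\<Sum>j<m. A $$ (j, k) * w $ j) = 0) \<and> (\<forall>t<m. (row A t \<bullet> x - b $ t) * w $ t = 0)"
    (is "?ker \<longleftrightarrow> ?upper \<and> ?lower")
proof
  assume ker: ?ker
  show "?upper \<and> ?lower"
  proof (intro conjI allI impI)
    fix k assume "k < n"
    then show "(\<Sum>j<m. A $$ (j, k) * w $ j) = 0"
      using arg_cong[OF ker, of "\<lambda>v. v $ k"] Cmat_mult_vec_upper[OF A w] by simp
  next
    fix t assume "t < m"
    then show "(row A t \<bullet> x - b $ t) * w $ t = 0"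
      using arg_cong[OF ker, of "\<lambda>v. v $ (n + t)"] Cmat_mult_vec_lower[OF A w] by simp
  qed
next
  assume "?upper \<and> ?lower"
  then have upper: ?upper and lower: ?lower by blast+
  show ?ker
  proof (rule eq_vecI)
    fix k assume "k < dim_vec (0\<^sub>v (n + m))"
    then have k: "k < n + m" by simp
    show "(Cmat A b x *\<^sub>v w) $ k = 0\<^sub>v (n + m) $ k"
    proof (cases "k < n")
      case True
      then show ?thesis using k upper Cmat_mult_vec_upper[OF A w] by simp
    next
      case False
      then obtain t where "k = n + t" "t < m"
        using k by (metis add_diff_inverse_nat add_less_cancel_left)
      then show ?thesis using lower Cmat_mult_vec_lower[OF A w] by simp
    qed
  qed (use Cmat_carrier[OF A, of b x] in simp)
qed

lemma mult_Cmat_index: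
  assumes A: "A \<in> carrier_mat m n" and P: "P \<in> carrier_mat r (n + m)" and "i < r" "j < m"
  shows "(P * Cmat A b x) $$ (i, j)
       = (\<Sum>k<n. P $$ (i, k) * A $$ (j, k)) + P $$ (i, n + j) * (row A j \<bullet> x - b $ j)"
proof -
  have "(P * Cmat A b x) $$ (i, j) = (\<Sum>k<n + m. P $$ (i, k) * Cmat A b x $$ (k, j))"
    using assms Cmat_carrier[OF A, of b x]
    by (auto simp: scalar_prod_def atLeast0LessThan intro!: sum.cong)
  also have "\<dots> = (\<Sum>k<n. P $$ (i, k) * A $$ (j, k))
      + (\<Sum>t<m. P $$ (i, n + t) * (if t = j then row A j \<bullet> x - b $ j else 0))"
    unfolding sum_lessThan_add using assms by (simp add: Cmat_def)
  also have "\<dots> = (\<Sum>k<n. P $$ (i, k) * A $$ (j, k)) + P $$ (i, n + j) * (row A j \<bullet> x - b $ j)"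
    using assms by (subst sum.remove[of _ j]) auto
  finally show ?thesis .
qed

lemma left_inverse_kernel_trivial:
  fixes P :: "'a::semiring_1 mat"
  assumes P: "P \<in> carrier_mat m p" and C: "C \<in> carrier_mat p m" and inv: "P * C = 1\<^sub>m m"
    and w: "w \<in> carrier_vec m" and "C *\<^sub>v w = 0\<^sub>v p"
  shows "w = 0\<^sub>v m"
proof -
  have "w = (P * C) *\<^sub>v w" using inv w by simp
  also have "\<dots> = P *\<^sub>v (C *\<^sub>v w)" by (rule assoc_mult_mat_vec[OF P C w])
  also have "\<dots> = P *\<^sub>v 0\<^sub>v p" using \<open>C *\<^sub>v w = 0\<^sub>v p\<close> by simp
  also have "\<dots> = 0\<^sub>v m" using P by (auto simp: vec_eq_iff)
  finally show ?thesis .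
qed

definition nonsingular_real :: "real mat \<Rightarrow> real vec \<Rightarrow> bool" where
  "nonsingular_real A b \<longleftrightarrow>
     (\<forall>x\<in>carrier_vec (dim_col A). \<forall>w\<in>carrier_vec (dim_row A).
        Cmat A b x *\<^sub>v w = 0\<^sub>v (dim_col A + dim_row A) \<longrightarrow> w = 0\<^sub>v (dim_row A))"

lemma nonsingular_realD:
  assumes "nonsingular_real A b" "A \<in> carrier_mat m n" "x \<in> carrier_vec n" "w \<in> carrier_vec m"
    and "Cmat A b x *\<^sub>v w = 0\<^sub>v (n + m)"
  shows "w = 0\<^sub>v m"
  using assms unfolding nonsingular_real_def by auto

lemma Cmat_of_real:
  assumes "A \<in> carrier_mat m n" "b \<in> carrier_vec m" "x \<in> carrier_vec n"
  shows "map_mat complex_of_real (Cmat A b x)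
       = Cmat (map_mat complex_of_real A) (map_vec complex_of_real b) (map_vec complex_of_real x)"
  using assms by (intro eq_matI) (auto simp: Cmat_def row_scalar_prod_sum[of _ m n])

lemma nonsingular_lin_imp_nonsingular_real:
  assumes A: "A \<in> carrier_mat m n" and b: "b \<in> carrier_vec m" and ns: "nonsingular_lin A b"
  shows "nonsingular_real A b"
  unfolding nonsingular_real_def
proof (intro ballI impI)
  fix x w assume "x \<in> carrier_vec (dim_col A)" "w \<in> carrier_vec (dim_row A)"
    and ker: "Cmat A b x *\<^sub>v w = 0\<^sub>v (dim_col A + dim_row A)"
  then have x: "x \<in> carrier_vec n" and w: "w \<in> carrier_vec m" using A by auto
  let ?C = "Cmat (map_mat complex_of_real A) (map_vec complex_of_real b) (map_vec complex_of_real x)"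
  have C: "?C \<in> carrier_mat (n + m) m"
    using A by (intro Cmat_carrier) simp
  have "?C *\<^sub>v map_vec complex_of_real w = map_vec complex_of_real (Cmat A b x *\<^sub>v w)"
    unfolding Cmat_of_real[OF A b x, symmetric]
    by (rule of_real_hom.mult_mat_vec_hom[OF Cmat_carrier[OF A] w, symmetric])
  also have "\<dots> = 0\<^sub>v (n + m)"
    using ker A by simp
  finally have ker_C: "?C *\<^sub>v map_vec complex_of_real w = 0\<^sub>v (n + m)" .
  have "vec_space.rank (n + m) ?C = m"
    using ns x A unfolding nonsingular_lin_def by simp
  then have "\<forall>v\<in>carrier_vec m. ?C *\<^sub>v v = 0\<^sub>v (n + m) \<longrightarrow> v = 0\<^sub>v m"
    using vec_space.rank_eq_dim_col_iff_kernel_trivial[OF C] by simp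
  moreover have "map_vec complex_of_real w \<in> carrier_vec m" using w by simp
  ultimately have "map_vec complex_of_real w = 0\<^sub>v m"
    using ker_C by blast
  then show "w = 0\<^sub>v (dim_row A)"
    using A w by (auto simp: vec_eq_iff)
qed

lemma Cmat_complex_kernel_real_part:
  assumes A: "A \<in> carrier_mat m n" and b: "b \<in> carrier_vec m" and u: "u \<in> carrier_vec n" and v: "v \<in> carrier_vec m"
    and ker: "Cmat (map_mat complex_of_real A) (map_vec complex_of_real b) u *\<^sub>v v = 0\<^sub>v (n + m)"
    and f: "f = Re \<or> f = Im"
  shows "Cmat A b (map_vec Re u) *\<^sub>v map_vec f v = 0\<^sub>v (n + m)"
proof -
  have A': "map_mat complex_of_real A \<in> carrier_mat m n" using A by simp
  note ker = ker[unfolded Cmat_mult_vec_eq_0_iff[OF A' v]]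
  have f0: "f 0 = 0" using f by auto
  have "(\<Sum>j<m. A $$ (j, k) * f (v $ j)) = 0" if "k < n" for k
  proof -
    have "(\<Sum>j<m. complex_of_real (A $$ (j, k)) * v $ j) = 0"
      using ker that A by (auto intro: trans[OF sum.cong[OF refl] sym])
    moreover have "(\<Sum>j<m. A $$ (j, k) * f (v $ j)) = f (\<Sum>j<m. complex_of_real (A $$ (j, k)) * v $ j)"
      using f by auto
    ultimately show ?thesis using f0 by simp
  qed
  moreover have "(row A t \<bullet> map_vec Re u - b $ t) * f (v $ t) = 0" if "t < m" for t
  proof (cases "v $ t = 0")
    case False
    then have "row (map_mat complex_of_real A) t \<bullet> u = complex_of_real (b $ t)"
      using ker that b by auto
    moreover have "row (map_mat complex_of_real A) t \<bullet> u = (\<Sum>k<n. complex_of_real (A $$ (t, k)) * u $ k)"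
      unfolding row_scalar_prod_sum[OF A' u] using A that by (auto intro!: sum.cong)
    ultimately have "Re (\<Sum>k<n. complex_of_real (A $$ (t, k)) * u $ k) = b $ t"
      by simp
    then have "row A t \<bullet> map_vec Re u = b $ t"
      using row_scalar_prod_sum[OF A, of "map_vec Re u"] u by simp
    then show ?thesis by simp
  qed (use f in auto)
  ultimately show ?thesis
    using Cmat_mult_vec_eq_0_iff[OF A, of "map_vec f v"] v by simp
qed

lemma nonsingular_real_imp_nonsingular_lin:
  assumes A: "A \<in> carrier_mat m n" and b: "b \<in> carrier_vec m" and ns: "nonsingular_real A b"
  shows "nonsingular_lin A b"
  unfolding nonsingular_lin_def
proof
  fix u :: "complex vec" assume "u \<in> carrier_vec (dim_col A)"
  then have u: "u \<in> carrier_vec n" using A by simp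
  let ?C = "Cmat (map_mat complex_of_real A) (map_vec complex_of_real b) u"
  have C: "?C \<in> carrier_mat (n + m) m"
    using A by (intro Cmat_carrier) simp
  have "v = 0\<^sub>v m" if v: "v \<in> carrier_vec m" and ker: "?C *\<^sub>v v = 0\<^sub>v (n + m)" for v
  proof -
    have "map_vec f v = 0\<^sub>v m" if "f = Re \<or> f = Im" for f
      by (rule nonsingular_realD[OF ns A _ _ Cmat_complex_kernel_real_part[OF A b u v ker that]])
        (use u v in simp_all)
    then show ?thesis
      using v by (auto simp: vec_eq_iff complex_eq_iff)
  qed
  then show "vec_space.rank (dim_col A + dim_row A) ?C = dim_row A"
    using vec_space.rank_eq_dim_col_iff_kernel_trivial[OF C] A by simp
qed

lemma nonsingular_lin_iff_nonsingular_real: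
  "A \<in> carrier_mat m n \<Longrightarrow> b \<in> carrier_vec m \<Longrightarrow> nonsingular_lin A b \<longleftrightarrow> nonsingular_real A b"
  using nonsingular_lin_imp_nonsingular_real nonsingular_real_imp_nonsingular_lin by blast

lemma nonsingular_real_imp_active_rows_indpt:
  assumes A: "A \<in> carrier_mat m n" and ns: "nonsingular_real A b"
  shows "rows_indpt n (\<lambda>j k. A $$ (j, k))
           {j\<in>{..<m}. affine_form n (\<lambda>j k. A $$ (j, k)) (\<lambda>j. b $ j) j z = 0}"
  unfolding rows_indpt_def
proof (intro allI impI ballI)
  fix l j
  define Z where "Z = {j\<in>{..<m}. affine_form n (\<lambda>j k. A $$ (j, k)) (\<lambda>j. b $ j) j z = 0}"
  assume rel: "\<forall>k<n. (\<Sum>j\<in>Z. l j * A $$ (j, k)) = 0" and "j \<in> Z"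
  define w where "w = vec m (\<lambda>j. if j \<in> Z then l j else 0)"
  have w: "w \<in> carrier_vec m" by (simp add: w_def)
  have x: "vec n z \<in> carrier_vec n" by simp
  have "(\<Sum>j<m. A $$ (j, k) * w $ j) = (\<Sum>j\<in>Z. l j * A $$ (j, k))" for k
    by (rule sum.mono_neutral_cong_right) (auto simp: w_def Z_def)
  moreover have "(row A t \<bullet> vec n z - b $ t) * w $ t = 0" if "t < m" for t
    using that row_scalar_prod_sum[OF A x]
    by (simp add: w_def Z_def affine_form_def)
  ultimately have "Cmat A b (vec n z) *\<^sub>v w = 0\<^sub>v (n + m)"
    using rel by (simp add: Cmat_mult_vec_eq_0_iff[OF A w])
  then have "w = 0\<^sub>v m"
    by (rule nonsingular_realD[OF ns A x w])
  then show "l j = 0"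
    using \<open>j \<in> Z\<close> by (auto simp: Z_def w_def vec_eq_iff)
qed

lemma left_inverse_imp_nonsingular_real:
  assumes A: "A \<in> carrier_mat m n"
    and inv: "\<forall>x\<in>carrier_vec n. polymat_eval m (n + m) L x * Cmat A b x = 1\<^sub>m m"
  shows "nonsingular_real A b"
  unfolding nonsingular_real_def
proof (intro ballI impI)
  fix x w assume "x \<in> carrier_vec (dim_col A)" "w \<in> carrier_vec (dim_row A)"
    and "Cmat A b x *\<^sub>v w = 0\<^sub>v (dim_col A + dim_row A)"
  with A inv show "w = 0\<^sub>v (dim_row A)"
    using left_inverse_kernel_trivial[of "polymat_eval m (n + m) L x" m "n + m" "Cmat A b x" w]
    by (simp add: polymat_eval_def Cmat_carrier)
qed

lemma rank_le_card_spanning_rows: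
  assumes A: "A \<in> carrier_mat m n" and Z: "Z \<subseteq> {..<m}"
    and span: "rows_span n (\<lambda>j k. A $$ (j, k)) {..<m} Z"
  shows "vec_space.rank m A \<le> card Z"
proof -
  obtain h where h: "bij_betw h {..<card Z} Z"
    using ex_bij_betw_nat_finite[of Z] finite_subset[OF Z] by (auto simp: atLeast0LessThan)
  obtain \<mu> where \<mu>: "\<forall>i\<in>{..<m}. \<forall>k<n. A $$ (i, k) = (\<Sum>j\<in>Z. \<mu> i j * A $$ (j, k))"
    using span unfolding rows_span_def by (metis bchoice)
  define T where "T = mat m (card Z) (\<lambda>(i, t). \<mu> i (h t))"
  define B where "B = mat (card Z) n (\<lambda>(t, k). A $$ (h t, k))"
  have T: "T \<in> carrier_mat m (card Z)" and B: "B \<in> carrier_mat (card Z) n"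
    by (simp_all add: T_def B_def)
  have "A = T * B"
  proof (rule eq_matI)
    fix i k assume "i < dim_row (T * B)" "k < dim_col (T * B)"
    then have i: "i < m" and k: "k < n" using T B by auto
    have "(T * B) $$ (i, k) = (\<Sum>t<card Z. \<mu> i (h t) * A $$ (h t, k))"
      using i k by (simp add: T_def B_def scalar_prod_def atLeast0LessThan)
    also have "\<dots> = (\<Sum>j\<in>Z. \<mu> i j * A $$ (j, k))"
      by (rule sum.reindex_bij_betw[OF h])
    also have "\<dots> = A $$ (i, k)" using \<mu> i k by simp
    finally show "A $$ (i, k) = (T * B) $$ (i, k)" ..
  qed (use A T B in auto)
  then show ?thesis
    using vec_space.rank_mult_le_inner_dim[OF T B] by simp
qed

definition affine_poly :: "real mat \<Rightarrow> real vec \<Rightarrow> nat \<Rightarrow> rmpoly" where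
  "affine_poly A b j =
     (\<Sum>k<dim_col A. mpoly_const (A $$ (j, k)) * mpoly_var k) + mpoly_const (- b $ j)"

definition affine_prod :: "real mat \<Rightarrow> real vec \<Rightarrow> nat set \<Rightarrow> rmpoly" where
  "affine_prod A b S = (\<Prod>j\<in>S. affine_poly A b j)"

lemma mpoly_eval_affine_prod:
  assumes "A \<in> carrier_mat m n" "x \<in> carrier_vec n"
  shows "mpoly_eval (affine_prod A b S) x = (\<Prod>j\<in>S. row A j \<bullet> x - b $ j)"
  using assms
  by (simp add: affine_prod_def affine_poly_def mpoly_eval_prod mpoly_eval_add mpoly_eval_sum
      mpoly_eval_mult row_scalar_prod_sum[OF assms])

lemma mpoly_bounded_affine_prod:
  assumes "A \<in> carrier_mat m n" "card S \<le> d"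
  shows "mpoly_bounded n d (affine_prod A b S)"
proof -
  have "mpoly_bounded n 1 (affine_poly A b j)" for j
  proof -
    have "mpoly_bounded n (0 + 1) (mpoly_const (A $$ (j, k)) * mpoly_var k)" if "k < n" for k
      by (intro mpoly_bounded_mult mpoly_bounded_const mpoly_bounded_var that)
    then show ?thesis
      using assms(1) unfolding affine_poly_def
      by (intro mpoly_bounded_add mpoly_bounded_sum) auto
  qed
  then have "mpoly_bounded n (card S) (affine_prod A b S)"
    unfolding affine_prod_def by (rule mpoly_bounded_prod)
  then show ?thesis using assms(2) by (rule mpoly_bounded_mono)
qed

text \<open>Here \<open>d\<close> is meant to be a dual family of the rows in \<open>Z\<close> (\<open>a\<^sub>j\<^sup>T d\<^sub>i = \<delta>\<^sub>i\<^sub>j\<close> for \<open>i, j \<in> Z\<close>). In a row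
  \<open>i \<in> Z\<close> the first block contributes \<open>a\<^sub>j\<^sup>T d\<^sub>i\<close> times the product of the \<open>c\<^sub>l\<close> with \<open>l \<notin> Z\<close>, which is
  \<open>\<delta>\<^sub>i\<^sub>j\<close> times that product for \<open>j \<in> Z\<close> and is cancelled by the \<open>D\<close>-block entry for \<open>j \<notin> Z\<close>;
  a row \<open>i \<notin> Z\<close> only uses the diagonal entry of the \<open>D\<close>-block.\<close>

definition basis_left_inverse ::
    "real mat \<Rightarrow> real vec \<Rightarrow> nat set \<Rightarrow> (nat \<Rightarrow> nat \<Rightarrow> real) \<Rightarrow> nat \<Rightarrow> nat \<Rightarrow> rmpoly" where
  "basis_left_inverse A b Z d i k =
     (if k < dim_col A then
        (if i \<in> Z then mpoly_const (d i k) * affine_prod A b ({..<dim_row A} - Z) else 0)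
      else if i \<in> Z then
        (if k - dim_col A \<in> Z then 0
         else mpoly_const (- (\<Sum>k'<dim_col A. A $$ (k - dim_col A, k') * d i k'))
                * affine_prod A b ({..<dim_row A} - Z - {k - dim_col A}))
      else if k - dim_col A = i then affine_prod A b ({..<dim_row A} - Z - {i})
      else 0)"

lemma mpoly_bounded_basis_left_inverse:
  assumes A: "A \<in> carrier_mat m n" and "Z \<subseteq> {..<m}"
  shows "mpoly_bounded n (m - card Z) (basis_left_inverse A b Z d i k)"
proof -
  have "card S \<le> m - card Z" if "S \<subseteq> {..<m} - Z" for S
    using card_mono[OF _ that] card_Diff_subset[OF finite_subset[OF assms(2)] assms(2)] by simp
  then have "mpoly_bounded n (m - card Z) (affine_prod A b S)"
    if "S \<subseteq> {..<m} - Z" for S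
    using that by (auto intro!: mpoly_bounded_affine_prod[OF A])
  then show ?thesis
    using A unfolding basis_left_inverse_def by (auto intro!: mpoly_bounded_const_mult)
qed

lemma basis_left_inverse_mult_Cmat:
  assumes A: "A \<in> carrier_mat m n" and Z: "Z \<subseteq> {..<m}" and x: "x \<in> carrier_vec n"
    and dual: "\<And>i j. i \<in> Z \<Longrightarrow> j \<in> Z \<Longrightarrow> (\<Sum>k<n. A $$ (j, k) * d i k) = (if j = i then 1 else 0)"
  shows "polymat_eval m (n + m) (basis_left_inverse A b Z d) x * Cmat A b x
       = (\<Prod>j\<in>{..<m} - Z. row A j \<bullet> x - b $ j) \<cdot>\<^sub>m 1\<^sub>m m" (is "_ = ?R")
proof (rule eq_matI)
  define c where "c j = row A j \<bullet> x - b $ j" for j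
  define Y where "Y = {..<m} - Z"
  define \<pi> where "\<pi> S = (\<Prod>j\<in>S. c j)" for S
  have ev: "mpoly_eval (affine_prod A b S) x = \<pi> S" for S
    by (simp add: mpoly_eval_affine_prod[OF A x] \<pi>_def c_def)
  have split: "\<pi> Y = c j * \<pi> (Y - {j})" if "j \<in> Y" for j
    unfolding \<pi>_def using that by (simp add: Y_def prod.remove)
  fix i j assume "i < dim_row ?R" "j < dim_col ?R"
  then have i: "i < m" and j: "j < m" by simp_all
  define s where "s = (\<Sum>k<n. A $$ (j, k) * d i k)"
  let ?P = "polymat_eval m (n + m) (basis_left_inverse A b Z d) x"
  have P: "?P \<in> carrier_mat m (n + m)" by (simp add: polymat_eval_def)
  have upper: "(\<Sum>k<n. ?P $$ (i, k) * A $$ (j, k)) = (if i \<in> Z then \<pi> Y * s else 0)"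
    using i A by (simp add: polymat_eval_def basis_left_inverse_def mpoly_eval_mult ev Y_def s_def
        sum_distrib_left mult_ac)
  have lower: "?P $$ (i, n + j) = (if i \<in> Z then (if j \<in> Z then 0 else - s * \<pi> (Y - {j}))
                                   else if j = i then \<pi> (Y - {i}) else 0)"
    using i j A by (simp add: polymat_eval_def basis_left_inverse_def mpoly_eval_mult ev Y_def s_def)
  have "(?P * Cmat A b x) $$ (i, j) = (if i \<in> Z then \<pi> Y * s else 0) + ?P $$ (i, n + j) * c j"
    unfolding mult_Cmat_index[OF A P i j] upper c_def ..
  also have "\<dots> = \<pi> Y * (if i = j then 1 else 0)"
  proof (cases "i \<in> Z")
    case True
    show ?thesis
    proof (cases "j \<in> Z")
      case False
      then have "j \<in> Y" "i \<noteq> j" using j \<open>i \<in> Z\<close> by (auto simp: Y_def)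
      then show ?thesis using True False split[of j] by (simp add: lower)
    qed (use True dual[of i j] in \<open>simp add: lower s_def\<close>)
  next
    case False
    then have "i \<in> Y" using i by (simp add: Y_def)
    then show ?thesis using False split[of i] by (simp add: lower mult.commute)
  qed
  finally show "(?P * Cmat A b x) $$ (i, j) = ?R $$ (i, j)"
    using i j by (simp add: \<pi>_def c_def Y_def)
qed (use Cmat_carrier[OF A, of b x] in \<open>simp_all add: polymat_eval_def\<close>)

lemma polymat_eval_lincomb_mult:
  assumes C: "C \<in> carrier_mat p q"
  shows "polymat_eval r p (\<lambda>i k. \<Sum>Z\<in>G. mpoly_const (\<alpha> Z) * N Z i k) x * C
       = mat r q (\<lambda>(i, j). \<Sum>Z\<in>G. \<alpha> Z * (polymat_eval r p (N Z) x * C) $$ (i, j))"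
proof (rule eq_matI)
  fix i j assume "i < dim_row (mat r q (\<lambda>(i, j). \<Sum>Z\<in>G. \<alpha> Z * (polymat_eval r p (N Z) x * C) $$ (i, j)))"
    "j < dim_col (mat r q (\<lambda>(i, j). \<Sum>Z\<in>G. \<alpha> Z * (polymat_eval r p (N Z) x * C) $$ (i, j)))"
  then have "i < r" "j < q" by simp_all
  with C show "(polymat_eval r p (\<lambda>i k. \<Sum>Z\<in>G. mpoly_const (\<alpha> Z) * N Z i k) x * C) $$ (i, j)
      = mat r q (\<lambda>(i, j). \<Sum>Z\<in>G. \<alpha> Z * (polymat_eval r p (N Z) x * C) $$ (i, j)) $$ (i, j)"
    by (simp add: polymat_eval_def scalar_prod_def mpoly_eval_sum mpoly_eval_mult
        sum_distrib_left sum_distrib_right mult.assoc sum.swap[of _ G])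
qed (use C in \<open>simp_all add: polymat_eval_def\<close>)

lemma lincomb_basis_left_inverse_mult_Cmat:
  assumes A: "A \<in> carrier_mat m n" and x: "x \<in> carrier_vec n" and G: "\<And>Z. Z \<in> G \<Longrightarrow> Z \<subseteq> {..<m}"
    and dual: "\<And>Z i j. Z \<in> G \<Longrightarrow> i \<in> Z \<Longrightarrow> j \<in> Z \<Longrightarrow>
                 (\<Sum>k<n. A $$ (j, k) * D Z i k) = (if j = i then 1 else 0)"
    and unity: "(\<Sum>Z\<in>G. \<alpha> Z * (\<Prod>j\<in>{..<m} - Z. row A j \<bullet> x - b $ j)) = 1"
  shows "polymat_eval m (n + m) (\<lambda>i k. \<Sum>Z\<in>G. mpoly_const (\<alpha> Z) * basis_left_inverse A b Z (D Z) i k) x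
           * Cmat A b x = 1\<^sub>m m"
proof -
  define \<pi> where "\<pi> Z = (\<Prod>j\<in>{..<m} - Z. row A j \<bullet> x - b $ j)" for Z
  have "polymat_eval m (n + m) (\<lambda>i k. \<Sum>Z\<in>G. mpoly_const (\<alpha> Z) * basis_left_inverse A b Z (D Z) i k) x
          * Cmat A b x
      = mat m m (\<lambda>(i, j). \<Sum>Z\<in>G. \<alpha> Z * (\<pi> Z \<cdot>\<^sub>m 1\<^sub>m m) $$ (i, j))"
    unfolding polymat_eval_lincomb_mult[OF Cmat_carrier[OF A]]
    using basis_left_inverse_mult_Cmat[OF A G x dual] by (simp add: \<pi>_def)
  also have "\<dots> = 1\<^sub>m m"
    using unity by (intro eq_matI) (auto simp: \<pi>_def sum_distrib_right[symmetric])
  finally show ?thesis .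
qed

lemma nonsingular_real_imp_polynomial_left_inverse:
  assumes A: "A \<in> carrier_mat m n" and ns: "nonsingular_real A b"
  shows "\<exists>L. (\<forall>i k. mpoly_bounded n (m - vec_space.rank m A) (L i k)) \<and>
             (\<forall>x\<in>carrier_vec n. polymat_eval m (n + m) L x * Cmat A b x = 1\<^sub>m m)"
proof -
  let ?a = "\<lambda>j k. A $$ (j, k)" and ?b = "\<lambda>j. b $ j"
  obtain \<alpha> where supp: "\<forall>Z. \<alpha> Z \<noteq> 0 \<longrightarrow> Z \<subseteq> {..<m} \<and> rows_indpt n ?a Z \<and> rows_span n ?a {..<m} Z"
    and unity: "\<forall>x. (\<Sum>Z\<in>Pow {..<m}. \<alpha> Z * (\<Prod>j\<in>{..<m} - Z. affine_form n ?a ?b j x)) = 1"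
    using unity_combination_over_bases[OF nonsingular_real_imp_active_rows_indpt[OF A ns]
        finite_lessThan subset_refl rows_span_refl[OF finite_lessThan]]
    unfolding unity_combination_def by blast
  define G where "G = {Z \<in> Pow {..<m}. \<alpha> Z \<noteq> 0}"
  have G: "Z \<subseteq> {..<m}" "rows_indpt n ?a Z" "rows_span n ?a {..<m} Z" if "Z \<in> G" for Z
    using supp that by (auto simp: G_def)
  have "\<exists>d. \<forall>i\<in>Z. \<forall>j\<in>Z. (\<Sum>k<n. A $$ (j, k) * d i k) = (if j = i then 1 else 0)"
    if "Z \<in> G" for Z
    using rows_indpt_dual[OF finite_subset[OF G(1)[OF that] finite_lessThan] G(2)[OF that]] .
  then have "\<forall>Z\<in>G. \<exists>d. \<forall>i\<in>Z. \<forall>j\<in>Z. (\<Sum>k<n. A $$ (j, k) * d i k) = (if j = i then 1 else 0)"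
    by blast
  then obtain D where D: "\<forall>Z\<in>G. \<forall>i\<in>Z. \<forall>j\<in>Z. (\<Sum>k<n. A $$ (j, k) * D Z i k) = (if j = i then 1 else 0)"
    by (metis bchoice)
  define L where "L i k = (\<Sum>Z\<in>G. mpoly_const (\<alpha> Z) * basis_left_inverse A b Z (D Z) i k)" for i k
  have "mpoly_bounded n (m - vec_space.rank m A) (L i k)" for i k
    unfolding L_def
  proof (intro mpoly_bounded_sum mpoly_bounded_const_mult)
    fix Z assume "Z \<in> G"
    with G have "m - card Z \<le> m - vec_space.rank m A"
      using rank_le_card_spanning_rows[OF A] by (simp add: diff_le_mono2)
    with mpoly_bounded_basis_left_inverse[OF A G(1)[OF \<open>Z \<in> G\<close>]]
    show "mpoly_bounded n (m - vec_space.rank m A) (basis_left_inverse A b Z (D Z) i k)"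
      by (rule mpoly_bounded_mono)
  qed
  moreover have "polymat_eval m (n + m) L x * Cmat A b x = 1\<^sub>m m" if x: "x \<in> carrier_vec n" for x
  proof -
    have "(\<Sum>Z\<in>G. \<alpha> Z * (\<Prod>j\<in>{..<m} - Z. row A j \<bullet> x - b $ j))
        = (\<Sum>Z\<in>Pow {..<m}. \<alpha> Z * (\<Prod>j\<in>{..<m} - Z. affine_form n ?a ?b j (\<lambda>k. x $ k)))"
      by (rule sum.mono_neutral_cong_left)
        (auto simp: G_def affine_form_def row_scalar_prod_sum[OF A x])
    also have "\<dots> = 1"
      using unity by blast
    finally have unity_x: "(\<Sum>Z\<in>G. \<alpha> Z * (\<Prod>j\<in>{..<m} - Z. row A j \<bullet> x - b $ j)) = 1" .
    have dual: "(\<Sum>k<n. A $$ (j, k) * D Z i k) = (if j = i then 1 else 0)"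
      if "Z \<in> G" "i \<in> Z" "j \<in> Z" for Z i j
      using D that by blast
    show ?thesis
      unfolding L_def by (rule lincomb_basis_left_inverse_mult_Cmat[OF A x G(1) dual unity_x])
  qed
  ultimately show ?thesis by blast
qed

theorem proposition4p1:
  fixes A :: "real mat" and b :: "real vec" and m n :: nat
  assumes "A \<in> carrier_mat m n" and "b \<in> carrier_vec m"
  shows "(nonsingular_lin A b \<longleftrightarrow>
           (\<exists>L :: nat \<Rightarrow> nat \<Rightarrow> rmpoly.
              (\<forall>i<m. \<forall>k<n+m. mpoly_vars_below n (L i k)) \<and>
              (\<forall>x \<in> carrier_vec n. polymat_eval m (n+m) L x * Cmat A b x = 1\<^sub>m m)))
       \<and> (nonsingular_lin A b \<longrightarrow>
           (\<exists>L :: nat \<Rightarrow> nat \<Rightarrow> rmpoly.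
              (\<forall>i<m. \<forall>k<n+m. mpoly_vars_below n (L i k)) \<and>
              (\<forall>x \<in> carrier_vec n. polymat_eval m (n+m) L x * Cmat A b x = 1\<^sub>m m) \<and>
              (\<forall>i<m. \<forall>k<n+m. mpoly_degree (L i k) \<le> m - vec_space.rank m A)))"
proof -
  have iff: "nonsingular_lin A b \<longleftrightarrow> nonsingular_real A b"
    using nonsingular_lin_iff_nonsingular_real assms by blast
  have "\<exists>L. (\<forall>i<m. \<forall>k<n+m. mpoly_vars_below n (L i k)) \<and>
            (\<forall>x \<in> carrier_vec n. polymat_eval m (n+m) L x * Cmat A b x = 1\<^sub>m m) \<and>
            (\<forall>i<m. \<forall>k<n+m. mpoly_degree (L i k) \<le> m - vec_space.rank m A)"
    if "nonsingular_lin A b"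
    using nonsingular_real_imp_polynomial_left_inverse[OF assms(1)] that iff
      mpoly_bounded_imp_vars_below mpoly_bounded_imp_degree_le by meson
  moreover have "nonsingular_lin A b"
    if "\<forall>x \<in> carrier_vec n. polymat_eval m (n+m) L x * Cmat A b x = 1\<^sub>m m" for L
    using left_inverse_imp_nonsingular_real[OF assms(1) that] iff by blast
  ultimately show ?thesis by blast
qed

end
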